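(* Let $n\ge1$, let $\mathcal S$ be a subset of $\{E_{ij}:1\le i,j\le n\}$ and $A\in\mathfrak{gl}(n)$. Let $\mathcal G_{\mathcal S}$ be the digraph on $\{1,\dots,n\}$ with arc $(i,j)$ iff $E_{ij}\in\mathcal S$, and $\mathcal G_A$ the digraph on $\{1,\dots,n\}$ with arc $(i,j)$ iff $A_{ij}\ne0$ (arcs $(i,i)$ being self-loops). Suppose (i) each weakly connected component of $\mathcal G_{\mathcal S}$ is strongly connected with at least two nodes; (ii) $\mathcal G_{\mathcal S}$ has at least one self-loop; (iii) the union digraph $\mathcal G_A\cup\mathcal G_{\mathcal S}$ is strongly connected. Then the real Lie algebra generated by $\{A\}\cup\mathcal S$ equals $\mathfrak{gl}(n)$.
   Context: $E_{ij}$ is the $n\times n$ matrix with $(i,j)$ entry $1$ and others $0$; $\mathfrak{gl}(n)$ is the Lie algebra of real $n\times n$ matrices with bracket $[X,Y]=XY-YX$. A weakly connected component of a digraph is a connected component when directions are ignored; strongly connected means all pairs of nodes are mutually reachable via directed paths; the union digraph has the union of arc sets. *)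

theory Defs
  imports "HOL-Analysis.Analysis"
begin

definition matE :: "'n::finite \<Rightarrow> 'n \<Rightarrow> real^'n^'n" where
  "matE i j = (\<chi> a b. if a = i \<and> b = j then 1 else 0)"

definition lie_bracket :: "real^'n::finite^'n \<Rightarrow> real^'n^'n \<Rightarrow> real^'n^'n" where
  "lie_bracket X Y = X ** Y - Y ** X"

definition lie_generated :: "(real^'n::finite^'n) set \<Rightarrow> (real^'n^'n) set" where
  "lie_generated X = \<Inter>{L. subspace L \<and> X \<subseteq> L \<and>
      (\<forall>x\<in>L. \<forall>y\<in>L. lie_bracket x y \<in> L)}"

definition digraph_of_set :: "(real^'n::finite^'n) set \<Rightarrow> ('n \<times> 'n) set" where
  "digraph_of_set S = {(i,j). matE i j \<in> S}"

definition digraph_of_matrix :: "real^'n::finite^'n \<Rightarrow> ('n \<times> 'n) set" where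
  "digraph_of_matrix A = {(i,j). A $ i $ j \<noteq> 0}"

definition weak_component :: "('n \<times> 'n) set \<Rightarrow> 'n \<Rightarrow> 'n set" where
  "weak_component R v = {w. (v, w) \<in> (R \<union> R\<inverse>)\<^sup>*}"

definition strongly_connected_on :: "('n \<times> 'n) set \<Rightarrow> 'n set \<Rightarrow> bool" where
  "strongly_connected_on R V = (\<forall>u\<in>V. \<forall>w\<in>V. (u, w) \<in> R\<^sup>* \<and> (w, u) \<in> R\<^sup>*)"

definition strongly_connected :: "('n \<times> 'n) set \<Rightarrow> bool" where
  "strongly_connected R = strongly_connected_on R UNIV"

end

(* Let L be the generated algebra and E_pp in S. Within a strong component of the S-digraph,
   [E_uv, E_vw] = E_uw puts every off-diagonal unit of the component into L; so each vertex y has a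
   partner s with E_ys, E_sy in L. The set of y with E_py in L is closed under arcs of S, by the same
   identity, and under arcs x -> y of A: projecting [A, E_px] onto row p with ad E_pp and bracketing
   with E_ys gives a nonzero multiple of E_ps, and [E_ps, E_sy] = E_py. Strong connectivity of the
   union digraph gives all of row p, transposition all of column p, and then all matrix units. *)

theory Submission
  imports Defs
begin

lemma matE_nth [simp]: "matE a b $ i $ j = (if i = a \<and> j = b then 1 else 0)"
  by (simp add: matE_def)

lemma matE_mult_nth [simp]: "(matE a b ** X) $ i $ j = (if i = a then X $ b $ j else 0)"
  by (cases "i = a")
    (simp_all add: matrix_matrix_mult_def matE_def if_distrib[of "\<lambda>u. u * _"] cong: if_cong)

lemma mult_matE_nth [simp]: "(X ** matE a b) $ i $ j = (if j = b then X $ i $ a else 0)"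
  by (cases "j = b")
    (simp_all add: matrix_matrix_mult_def matE_def if_distrib[of "\<lambda>u. _ * u"] cong: if_cong)

lemma lie_bracket_nth [simp]: "lie_bracket X Y $ i $ j = (X ** Y) $ i $ j - (Y ** X) $ i $ j"
  by (simp add: lie_bracket_def)

lemma lie_bracket_matE_matE: "p \<noteq> r \<Longrightarrow> lie_bracket (matE p q) (matE q r) = matE p r"
  by (auto simp: vec_eq_iff)

lemma lie_bracket_matE_matE_swap: "p \<noteq> q \<Longrightarrow> lie_bracket (matE p q) (matE q p) = matE p p - matE q q"
  by (auto simp: vec_eq_iff)

text \<open>The operator \<open>ad E\<^sub>p\<^sub>p\<close> scales the off-diagonal part of row \<open>p\<close> by \<open>1\<close>, that of
  column \<open>p\<close> by \<open>-1\<close>, and kills everything else; so \<open>ad + ad\<^sup>2\<close> is twice the projection onto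
  row \<open>p\<close> without its diagonal entry.\<close>
lemma lie_bracket_row_projection_matE:
  assumes "y \<noteq> p" "s \<noteq> p"
  shows "lie_bracket (lie_bracket (matE p p) M + lie_bracket (matE p p) (lie_bracket (matE p p) M))
           (matE y s) = (2 * M $ p $ y) *\<^sub>R matE p s"
  using assms by (auto simp: vec_eq_iff)

lemma lie_bracket_mult_matE_row_nth: "x \<noteq> y \<Longrightarrow> lie_bracket A (matE p x) $ p $ y = - A $ x $ y"
  by simp

lemma matrix_eq_sum_matE: "(X::real^'n::finite^'n) = (\<Sum>i\<in>UNIV. \<Sum>j\<in>UNIV. X $ i $ j *\<^sub>R matE i j)"
proof -
  have row: "(\<Sum>b\<in>UNIV. if i = a \<and> j = b then X $ a $ b else 0) = (if i = a then X $ a $ j else 0)"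
    for i j a
    by (cases "i = a") simp_all
  show ?thesis
    by (simp add: vec_eq_iff if_distrib[of "\<lambda>x. _ * x"] row cong: if_cong)
qed

lemma transpose_matE [simp]: "transpose (matE i j) = matE j i"
  by (auto simp: vec_eq_iff transpose_def)

lemma linear_transpose: "linear (transpose :: 'a::real_vector^'n^'m \<Rightarrow> 'a^'m^'n)"
  by (rule linearI) (simp_all add: vec_eq_iff transpose_def)

lemma transpose_lie_bracket:
  "transpose (lie_bracket X Y) = lie_bracket (transpose Y) (transpose X)"
  by (simp add: lie_bracket_def matrix_transpose_mul linear_diff[OF linear_transpose])

definition lie_subalgebra :: "(real^'n::finite^'n) set \<Rightarrow> bool" where
  "lie_subalgebra L \<longleftrightarrow> subspace L \<and> (\<forall>x\<in>L. \<forall>y\<in>L. lie_bracket x y \<in> L)"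

lemma lie_subalgebra_lie_generated: "lie_subalgebra (lie_generated X)"
  unfolding lie_subalgebra_def lie_generated_def by (auto intro: subspace_Inter)

lemma lie_generated_superset: "X \<subseteq> lie_generated X"
  unfolding lie_generated_def by auto

lemma lie_subalgebra_transpose:
  assumes "lie_subalgebra L"
  shows "lie_subalgebra (transpose ` L)"
  using assms linear_subspace_image[OF linear_transpose]
  by (auto simp: lie_subalgebra_def simp flip: transpose_lie_bracket)

lemma transpose_mem_image_transpose_iff [simp]: "transpose X \<in> transpose ` L \<longleftrightarrow> X \<in> L"
  by (metis image_iff transpose_iff)

context
  fixes L :: "(real^'n::finite^'n) set"
  assumes L: "lie_subalgebra L"
begin

lemma lie_subalgebra_bracket: "x \<in> L \<Longrightarrow> y \<in> L \<Longrightarrow> lie_bracket x y \<in> L"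
  using L by (simp add: lie_subalgebra_def)

lemma lie_subalgebra_subspace: "subspace L"
  using L by (simp add: lie_subalgebra_def)

lemma matE_mem_trans: "p \<noteq> r \<Longrightarrow> matE p q \<in> L \<Longrightarrow> matE q r \<in> L \<Longrightarrow> matE p r \<in> L"
  by (metis lie_bracket_matE_matE lie_subalgebra_bracket)

lemma matE_mem_if_rtrancl:
  assumes "(u, w) \<in> (digraph_of_set L)\<^sup>*" "u \<noteq> w"
  shows "matE u w \<in> L"
  using assms
proof (induction rule: rtrancl_induct)
  case (step v w)
  then have "matE v w \<in> L"
    by (simp add: digraph_of_set_def)
  with step show ?case
    by (cases "u = v") (auto intro: matE_mem_trans)
qed simp

lemma matE_row_mem_step:
  assumes "matE p p \<in> L" "A \<in> L" "matE p x \<in> L" "A $ x $ y \<noteq> 0"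
    and "s \<noteq> y" "matE y s \<in> L" "matE s y \<in> L"
  shows "matE p y \<in> L"
proof (cases "y = p \<or> x = y \<or> s = p")
  case False
  then have "y \<noteq> p" "x \<noteq> y" "s \<noteq> p" by auto
  let ?M = "lie_bracket A (matE p x)"
  have "lie_bracket (lie_bracket (matE p p) ?M + lie_bracket (matE p p) (lie_bracket (matE p p) ?M))
      (matE y s) \<in> L"
    using assms by (intro lie_subalgebra_bracket subspace_add[OF lie_subalgebra_subspace])
  then have "(- 2 * A $ x $ y) *\<^sub>R matE p s \<in> L"
    using \<open>y \<noteq> p\<close> \<open>s \<noteq> p\<close> \<open>x \<noteq> y\<close>
    by (simp add: lie_bracket_row_projection_matE lie_bracket_mult_matE_row_nth)
  then have "matE p s \<in> L"
    using \<open>A $ x $ y \<noteq> 0\<close> subspace_mul[OF lie_subalgebra_subspace, of _ "inverse (- 2 * A $ x $ y)"]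
    by fastforce
  with \<open>y \<noteq> p\<close> \<open>matE s y \<in> L\<close> show ?thesis
    by (metis matE_mem_trans)
qed (use assms in auto)

lemma matE_row_mem_if_reachable:
  assumes "matE p p \<in> L" "A \<in> L"
    and partner: "\<And>y. \<exists>s. s \<noteq> y \<and> matE y s \<in> L \<and> matE s y \<in> L"
    and "(p, y) \<in> (digraph_of_matrix A \<union> digraph_of_set L)\<^sup>*"
  shows "matE p y \<in> L"
  using assms(4)
proof (induction rule: rtrancl_induct)
  case (step x y)
  show ?case
  proof (cases "(x, y) \<in> digraph_of_set L")
    case True
    then show ?thesis
      using step.IH \<open>matE p p \<in> L\<close> matE_mem_trans[of p y x]
      by (cases "p = y") (auto simp: digraph_of_set_def)
  next
    case False
    then have "A $ x $ y \<noteq> 0"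
      using step.hyps(2) by (simp add: digraph_of_matrix_def)
    with partner[of y] show ?thesis
      using matE_row_mem_step[OF \<open>matE p p \<in> L\<close> \<open>A \<in> L\<close> step.IH] by blast
  qed
qed (use assms in simp)

lemma matE_mem_if_hub:
  assumes "matE p p \<in> L" "\<And>y. matE p y \<in> L" "\<And>y. matE y p \<in> L"
  shows "matE u w \<in> L"
proof (cases "u = w")
  case True
  have "matE p p - lie_bracket (matE p u) (matE u p) \<in> L"
    using assms lie_subalgebra_bracket subspace_diff[OF lie_subalgebra_subspace] by blast
  with True assms(1) show ?thesis
    by (cases "u = p") (simp_all add: lie_bracket_matE_matE_swap)
next
  case False
  with assms matE_mem_trans[of u w p] show ?thesis
    by (cases "u = p \<or> w = p") auto
qed

lemma lie_subalgebra_eq_UNIV_if_matE: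
  assumes "\<And>i j. matE i j \<in> L"
  shows "L = UNIV"
proof -
  have "X \<in> L" for X
    by (subst matrix_eq_sum_matE)
      (intro subspace_sum subspace_mul lie_subalgebra_subspace assms)
  then show ?thesis
    by auto
qed

end

lemma matE_mem_image_transpose_iff [simp]: "matE i j \<in> transpose ` L \<longleftrightarrow> matE j i \<in> L"
  by (metis transpose_matE transpose_mem_image_transpose_iff)

lemma digraph_of_set_image_transpose: "digraph_of_set (transpose ` L) = (digraph_of_set L)\<inverse>"
  by (auto simp: digraph_of_set_def)

lemma digraph_of_matrix_transpose: "digraph_of_matrix (transpose A) = (digraph_of_matrix A)\<inverse>"
  by (auto simp: digraph_of_matrix_def transpose_def)

text \<open>Transposition reverses all arcs, so the column version is the row version for the transposed
  algebra.\<close>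
lemma matE_col_mem_if_reachable:
  assumes L: "lie_subalgebra L" and "matE p p \<in> L" "A \<in> L"
    and partner: "\<And>y. \<exists>s. s \<noteq> y \<and> matE y s \<in> L \<and> matE s y \<in> L"
    and "(y, p) \<in> (digraph_of_matrix A \<union> digraph_of_set L)\<^sup>*"
  shows "matE y p \<in> L"
proof -
  have reach: "(p, y) \<in> (digraph_of_matrix (transpose A) \<union> digraph_of_set (transpose ` L))\<^sup>*"
    using assms(5)
    by (simp add: digraph_of_matrix_transpose digraph_of_set_image_transpose rtrancl_converse
        flip: converse_Un)
  have "matE p y \<in> transpose ` L"
  proof (rule matE_row_mem_if_reachable[OF lie_subalgebra_transpose[OF L] _ _ _ reach])
    show "\<exists>s. s \<noteq> y \<and> matE y s \<in> transpose ` L \<and> matE s y \<in> transpose ` L" for y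
      using partner[of y] by auto
  qed (use assms(2,3) in simp_all)
  then show ?thesis
    by simp
qed

lemma obtain_cycle_in_weak_component:
  assumes "strongly_connected_on R (weak_component R v)" "card (weak_component R v) \<ge> 2"
  obtains s where "s \<noteq> v" "(v, s) \<in> R\<^sup>*" "(s, v) \<in> R\<^sup>*"
proof -
  have "v \<in> weak_component R v"
    by (simp add: weak_component_def)
  moreover have "\<not> weak_component R v \<subseteq> {v}"
    using assms(2) card_mono[of "{v}" "weak_component R v"] by auto
  then obtain s where "s \<in> weak_component R v" "s \<noteq> v"
    by blast
  ultimately show ?thesis
    using assms(1) that by (auto simp: strongly_connected_on_def)
qed

theorem lemma8:
  fixes S :: "(real^'n::finite^'n) set" and A :: "real^'n^'n"
  assumes "S \<subseteq> {matE i j | i j. True}"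
    and "\<forall>v. strongly_connected_on (digraph_of_set S) (weak_component (digraph_of_set S) v)
             \<and> card (weak_component (digraph_of_set S) v) \<ge> 2"
    and "\<exists>i. (i, i) \<in> digraph_of_set S"
    and "strongly_connected (digraph_of_matrix A \<union> digraph_of_set S)"
  shows "lie_generated ({A} \<union> S) = UNIV"
proof -
  define L where "L = lie_generated ({A} \<union> S)"
  have L: "lie_subalgebra L" and "A \<in> L" and S_arcs: "digraph_of_set S \<subseteq> digraph_of_set L"
    using lie_generated_superset[of "{A} \<union> S"]
    by (auto simp: L_def digraph_of_set_def lie_subalgebra_lie_generated)
  obtain p where "matE p p \<in> L"
    using assms(3) S_arcs by (auto simp: digraph_of_set_def)
  have partner: "\<exists>s. s \<noteq> y \<and> matE y s \<in> L \<and> matE s y \<in> L" for y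
  proof -
    obtain s where "s \<noteq> y" "(y, s) \<in> (digraph_of_set S)\<^sup>*" "(s, y) \<in> (digraph_of_set S)\<^sup>*"
      using assms(2) by (blast elim: obtain_cycle_in_weak_component)
    with rtrancl_mono[OF S_arcs] show ?thesis
      by (blast intro: matE_mem_if_rtrancl[OF L])
  qed
  have "(u, w) \<in> (digraph_of_matrix A \<union> digraph_of_set S)\<^sup>*" for u w
    using assms(4) by (simp add: strongly_connected_def strongly_connected_on_def)
  then have reach: "(u, w) \<in> (digraph_of_matrix A \<union> digraph_of_set L)\<^sup>*" for u w
    using rtrancl_mono[OF Un_mono[OF order_refl S_arcs]] by blast
  have "matE p y \<in> L" "matE y p \<in> L" for y
    using matE_row_mem_if_reachable[OF L \<open>matE p p \<in> L\<close> \<open>A \<in> L\<close> partner reach]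
      matE_col_mem_if_reachable[OF L \<open>matE p p \<in> L\<close> \<open>A \<in> L\<close> partner reach] .
  then have "matE i j \<in> L" for i j
    by (rule matE_mem_if_hub[OF L \<open>matE p p \<in> L\<close>])
  then show ?thesis
    unfolding L_def[symmetric] by (rule lie_subalgebra_eq_UNIV_if_matE[OF L])
qed

end
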